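(* For $1\le\ell\le r$ let \[ F_\ell(n)=z_\ell^n\prod_{\nu=1}^{m_\ell}P_{\ell,\nu}(n)^{q_{\ell,\nu}}\prod_{j=1}^{h_\ell}\mathcal H_{\alpha_{\ell,j}}(n)^{e_{\ell,j}}, \] where $P_{\ell,\nu}\in\mathbb C[x]$, $z_\ell,q_{\ell,\nu}\in\mathbb C$, $e_{\ell,j}\in\mathbb Z_{\ge0}$ and $\alpha_{\ell,j}$ are words. Assume no polynomial factor vanishes on the relevant positive integers, and fix branches for the complex powers. Then for every positive integer $k$, \[ T_r(k)=\sum_{n_r=1}^{k}\sum_{n_{r-1}=1}^{n_r}\cdots\sum_{n_1=1}^{n_2}\prod_{\ell=1}^{r}F_\ell(n_\ell)\in\operatorname{span}_{\mathbb C}\{\mathcal P_\Omega(k)\}_\Omega, \] where $\Omega$ ranges over words in polynomial letters.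
   Context: A letter is a pair $(r,s)\in\mathbb C^2$, a word is a finite sequence of letters, and for $\alpha=((r_1,s_1),\ldots,(r_d,s_d))$, $\mathcal H_{\alpha}(N)=\sum_{N\ge n_1>\cdots>n_d\ge1}\prod_{i}s_i^{n_i}n_i^{-r_i}$, $\mathcal H_\emptyset(N)=1$ ($n^r=\exp(r\log n)$). A polynomial letter is a triple $L=(\boldsymbol\rho,\sigma,\mathbf P)$ with $\boldsymbol\rho=(\rho_1,\ldots,\rho_t)\in\mathbb C^t$, $\sigma\in\mathbb C$, $\mathbf P=(P_1,\ldots,P_t)$, $P_\nu\in\mathbb C[x]$; its value is $L(n)=\sigma^n\prod_\nu P_\nu(n)^{-\rho_\nu}$ (branches fixed). For a word $\Omega=(L_1,\ldots,L_d)$ of polynomial letters, $\mathcal P_\Omega(N)=\sum_{N\ge n_1>\cdots>n_d\ge1}\prod_jL_j(n_j)$, $\mathcal P_\emptyset(N)=1$. *)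

theory Defs
  imports "HOL-Analysis.Analysis" "HOL-Computational_Algebra.Polynomial"
begin

type_synonym letter = "complex \<times> complex"
type_synonym word = "letter list"

fun Hsum :: "word \<Rightarrow> nat \<Rightarrow> complex" where
  "Hsum [] N = 1"
| "Hsum ((r, s) # a) N =
     (\<Sum>n = 1..N. s ^ n * exp (- r * of_real (ln (real n))) * Hsum a (n - 1))"

text \<open>A branch of log is parametrised by c: lg_c(w) = Ln(w * exp(-c)) + c
  (the principal branch rotated/shifted; c = 0 is the principal branch).\<close>
definition bpow :: "complex \<Rightarrow> complex \<Rightarrow> complex \<Rightarrow> complex" where
  "bpow c w q = exp (q * (Ln (w * exp (- c)) + c))"

text \<open>Polynomial letter (rho, sigma, P) with fixed branches: sigma together with
  a list of factors (rho_nu, P_nu, branch parameter c_nu).\<close>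
type_synonym pletter = "complex \<times> (complex \<times> complex poly \<times> complex) list"
type_synonym pword = "pletter list"

definition plval :: "pletter \<Rightarrow> nat \<Rightarrow> complex" where
  "plval L n = (fst L) ^ n *
     (\<Prod>(\<rho>, P, c) \<leftarrow> snd L. bpow c (poly P (of_nat n)) (- \<rho>))"

fun Psum :: "pword \<Rightarrow> nat \<Rightarrow> complex" where
  "Psum [] N = 1"
| "Psum (L # \<Omega>) N = (\<Sum>n = 1..N. plval L n * Psum \<Omega> (n - 1))"

text \<open>Data of one factor F_l: (z, [(P, q, c)], [(alpha, e)]).\<close>
type_synonym fdata =
  "complex \<times> (complex poly \<times> complex \<times> complex) list \<times> (word \<times> nat) list"

definition Fval :: "fdata \<Rightarrow> nat \<Rightarrow> complex" where
  "Fval D n = (fst D) ^ n *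
     (\<Prod>(P, q, c) \<leftarrow> fst (snd D). bpow c (poly P (of_nat n)) q) *
     (\<Prod>(a, e) \<leftarrow> snd (snd D). Hsum a n ^ e)"

fun Tsum :: "(nat \<Rightarrow> fdata) \<Rightarrow> nat \<Rightarrow> nat \<Rightarrow> complex" where
  "Tsum F 0 k = 1"
| "Tsum F (Suc l) k = (\<Sum>n = 1..k. Fval (F (Suc l)) n * Tsum F l n)"

end

theory Submission
  imports Defs
begin

text \<open>The functions \<open>\<P>\<^sub>\<Omega>\<close> span a space that contains the constants and, for every
  polynomial letter \<open>L\<close>, is closed under \<open>f \<mapsto> (k \<mapsto> \<Sum>n\<le>k. L(n) f(n - 1))\<close> and
  \<open>f \<mapsto> (k \<mapsto> \<Sum>n\<le>k. L(n) f(n))\<close>. It is also closed under pointwise products: nested sums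
  multiply by the quasi-shuffle (stuffle) rule, whose diagonal terms are again nested sums
  because the product of two polynomial letters is a polynomial letter. A harmonic sum
  \<open>\<H>\<^sub>\<alpha>\<close> is the nested sum of the letters \<open>(r, s, x)\<close>, and \<open>F\<^sub>\<ell>(n)\<close> is a polynomial
  letter times a product of harmonic sums, so \<open>T\<^sub>r\<close> lies in the span by induction on \<open>r\<close>.\<close>

inductive_set Psum_span :: "(nat \<Rightarrow> complex) set" where
  Psum: "Psum \<Omega> \<in> Psum_span"
| zero: "(\<lambda>_. 0) \<in> Psum_span"
| lincomb: "f \<in> Psum_span \<Longrightarrow> g \<in> Psum_span \<Longrightarrow> (\<lambda>N. a * f N + g N) \<in> Psum_span"

lemma Psum_span_one: "(\<lambda>_. 1) \<in> Psum_span"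
proof -
  have "Psum [] = (\<lambda>_. 1)" by (rule ext) simp
  then show ?thesis using Psum_span.Psum[of "[]"] by simp
qed

lemma Psum_span_add: "f \<in> Psum_span \<Longrightarrow> g \<in> Psum_span \<Longrightarrow> (\<lambda>N. f N + g N) \<in> Psum_span"
  using Psum_span.lincomb[of f g 1] by simp

lemma Psum_span_iff_lincomb:
  "f \<in> Psum_span \<longleftrightarrow> (\<exists>cs. \<forall>N. f N = (\<Sum>(a, \<Omega>) \<leftarrow> cs. a * Psum \<Omega> N))"
proof
  assume "f \<in> Psum_span"
  then show "\<exists>cs. \<forall>N. f N = (\<Sum>(a, \<Omega>) \<leftarrow> cs. a * Psum \<Omega> N)"
  proof induction
    case (Psum \<Omega>)
    show ?case by (rule exI[of _ "[(1, \<Omega>)]"]) simp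
  next
    case zero
    show ?case by (rule exI[of _ "[]"]) simp
  next
    case (lincomb f g a)
    then obtain cs ds where
      f: "\<forall>N. f N = (\<Sum>(b, \<Omega>) \<leftarrow> cs. b * Psum \<Omega> N)" and
      g: "\<forall>N. g N = (\<Sum>(b, \<Omega>) \<leftarrow> ds. b * Psum \<Omega> N)"
      by blast
    have "(\<Sum>(b, \<Omega>) \<leftarrow> map (\<lambda>(b, \<Omega>). (a * b, \<Omega>)) cs. b * Psum \<Omega> N)
            = a * (\<Sum>(b, \<Omega>) \<leftarrow> cs. b * Psum \<Omega> N)" for N
      by (induction cs) (auto simp: algebra_simps)
    with f g show ?case
      by (intro exI[of _ "map (\<lambda>(b, \<Omega>). (a * b, \<Omega>)) cs @ ds"]) simp
  qed
next
  assume "\<exists>cs. \<forall>N. f N = (\<Sum>(a, \<Omega>) \<leftarrow> cs. a * Psum \<Omega> N)"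
  then obtain cs where f: "f = (\<lambda>N. \<Sum>(a, \<Omega>) \<leftarrow> cs. a * Psum \<Omega> N)"
    by blast
  have "(\<lambda>N. \<Sum>(a, \<Omega>) \<leftarrow> cs. a * Psum \<Omega> N) \<in> Psum_span"
    by (induction cs) (auto intro: Psum_span.intros)
  with f show "f \<in> Psum_span" by simp
qed

lemma Psum_Cons_0 [simp]: "Psum (L # \<Omega>) 0 = 0"
  by simp

lemma Psum_Cons_Suc [simp]:
  "Psum (L # \<Omega>) (Suc N) = Psum (L # \<Omega>) N + plval L (Suc N) * Psum \<Omega> N"
  by simp

lemma Psum_Cons_eq_prev:
  "n \<ge> 1 \<Longrightarrow> Psum (L # \<Omega>) n = Psum (L # \<Omega>) (n - 1) + plval L n * Psum \<Omega> (n - 1)"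
  by (cases n) auto

lemma Psum_Cons_eq_sum: "Psum (L # \<Omega>) = (\<lambda>N. \<Sum>n = 1..N. plval L n * Psum \<Omega> (n - 1))"
  by (rule ext) simp

declare Psum.simps(2) [simp del]

lemma Psum_span_sum_prev:
  assumes "f \<in> Psum_span"
  shows "(\<lambda>N. \<Sum>n = 1..N. plval L n * f (n - 1)) \<in> Psum_span"
  using assms
proof induction
  case (Psum \<Omega>)
  show ?case using Psum_span.Psum[of "L # \<Omega>"] by (simp only: Psum_Cons_eq_sum)
next
  case zero
  show ?case using Psum_span.zero by simp
next
  case (lincomb f g a)
  have "(\<lambda>N. \<Sum>n = 1..N. plval L n * (a * f (n - 1) + g (n - 1)))
      = (\<lambda>N. a * (\<Sum>n = 1..N. plval L n * f (n - 1)) + (\<Sum>n = 1..N. plval L n * g (n - 1)))"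
    by (simp add: algebra_simps sum.distrib sum_distrib_left)
  with lincomb.IH show ?case by (simp add: Psum_span.lincomb)
qed

definition pletter_mult :: "pletter \<Rightarrow> pletter \<Rightarrow> pletter" where
  "pletter_mult L L' = (fst L * fst L', snd L @ snd L')"

lemma plval_pletter_mult: "plval (pletter_mult L L') n = plval L n * plval L' n"
  by (simp add: plval_def pletter_mult_def power_mult_distrib)

lemma Psum_sum_current:
  "(\<Sum>n = 1..N. plval L n * Psum \<Omega> n) =
     (case \<Omega> of [] \<Rightarrow> Psum [L] N
      | L' # \<Omega>' \<Rightarrow> Psum (L # L' # \<Omega>') N + Psum (pletter_mult L L' # \<Omega>') N)"
proof (cases \<Omega>)
  case (Cons L' \<Omega>')
  have "(\<Sum>n = 1..N. plval L n * Psum (L' # \<Omega>') n)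
      = (\<Sum>n = 1..N. plval L n * Psum (L' # \<Omega>') (n - 1)
                     + plval (pletter_mult L L') n * Psum \<Omega>' (n - 1))"
    by (intro sum.cong refl) (simp add: Psum_Cons_eq_prev plval_pletter_mult algebra_simps)
  with Cons show ?thesis
    by (simp add: sum.distrib Psum.simps(2)[of L] Psum.simps(2)[of "pletter_mult L L'"])
qed (simp add: Psum.simps)

lemma Psum_span_sum_current:
  assumes "f \<in> Psum_span"
  shows "(\<lambda>N. \<Sum>n = 1..N. plval L n * f n) \<in> Psum_span"
  using assms
proof induction
  case (Psum \<Omega>)
  show ?case
    unfolding Psum_sum_current
    by (cases \<Omega>) (auto intro: Psum_span.Psum Psum_span_add)
next
  case zero
  show ?case using Psum_span.zero by simp
next
  case (lincomb f g a)
  have "(\<lambda>N. \<Sum>n = 1..N. plval L n * (a * f n + g n))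
      = (\<lambda>N. a * (\<Sum>n = 1..N. plval L n * f n) + (\<Sum>n = 1..N. plval L n * g n))"
    by (simp add: algebra_simps sum.distrib sum_distrib_left)
  with lincomb.IH show ?case by (simp add: Psum_span.lincomb)
qed

lemma Psum_Cons_mult_Psum_Cons:
  "Psum (L # A) N * Psum (L' # B) N =
     (\<Sum>n = 1..N. plval L n * (Psum A (n - 1) * Psum (L' # B) (n - 1))
                + plval L' n * (Psum (L # A) (n - 1) * Psum B (n - 1))
                + plval (pletter_mult L L') n * (Psum A (n - 1) * Psum B (n - 1)))"
proof (induction N)
  case (Suc N)
  have "Psum (L # A) (Suc N) * Psum (L' # B) (Suc N)
      = Psum (L # A) N * Psum (L' # B) N
        + plval L (Suc N) * (Psum A N * Psum (L' # B) N)
        + plval L' (Suc N) * (Psum (L # A) N * Psum B N)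
        + plval (pletter_mult L L') (Suc N) * (Psum A N * Psum B N)"
    by (simp only: Psum_Cons_Suc plval_pletter_mult) (simp add: algebra_simps)
  with Suc.IH show ?case by simp
qed simp

lemma Psum_mult_Psum_in_span: "(\<lambda>N. Psum \<Omega> N * Psum \<Omega>' N) \<in> Psum_span"
proof (induction \<Omega> arbitrary: \<Omega>')
  case Nil
  show ?case using Psum_span.Psum[of \<Omega>'] by simp
next
  case (Cons L A)
  note outer_IH = Cons.IH
  show ?case
  proof (induction \<Omega>')
    case Nil
    show ?case using Psum_span.Psum[of "L # A"] by simp
  next
    case (Cons L' B)
    show ?case
      unfolding Psum_Cons_mult_Psum_Cons sum.distrib
      by (intro Psum_span_add Psum_span_sum_prev outer_IH Cons.IH)
  qed
qed

lemma Psum_span_mult: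
  assumes "f \<in> Psum_span" and "g \<in> Psum_span"
  shows "(\<lambda>N. f N * g N) \<in> Psum_span"
  using assms(1)
proof induction
  case (Psum \<Omega>)
  from assms(2) show ?case
  proof induction
    case (lincomb g h a)
    then show ?case
      using Psum_span.lincomb[OF lincomb.IH] by (simp add: algebra_simps)
  qed (auto intro: Psum_mult_Psum_in_span Psum_span.zero)
next
  case zero
  show ?case using Psum_span.zero by simp
next
  case (lincomb f h a)
  then show ?case
    using Psum_span.lincomb[OF lincomb.IH] by (simp add: algebra_simps)
qed

lemma Psum_span_power: "f \<in> Psum_span \<Longrightarrow> (\<lambda>N. f N ^ e) \<in> Psum_span"
  by (induction e) (simp_all add: Psum_span_one Psum_span_mult)

definition harmonic_pletter :: "letter \<Rightarrow> pletter" where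
  "harmonic_pletter x = (snd x, [(fst x, [:0, 1:], 0)])"

lemma Hsum_eq_Psum: "Hsum \<alpha> = Psum (map harmonic_pletter \<alpha>)"
proof (rule ext)
  fix N
  show "Hsum \<alpha> N = Psum (map harmonic_pletter \<alpha>) N"
  proof (induction \<alpha> arbitrary: N)
    case (Cons x \<alpha>)
    obtain r s where x: "x = (r, s)" by fastforce
    show ?case
      by (auto simp: x Cons harmonic_pletter_def plval_def bpow_def Psum.simps intro!: sum.cong)
  qed simp
qed

lemma Psum_span_Hsum_prod: "(\<lambda>n. \<Prod>(\<alpha>, e) \<leftarrow> hs. Hsum \<alpha> n ^ e) \<in> Psum_span"
proof (induction hs)
  case Nil
  show ?case using Psum_span_one by simp
next
  case (Cons h hs)
  obtain \<alpha> e where h: "h = (\<alpha>, e)" by fastforce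
  have "(\<lambda>N. Hsum \<alpha> N ^ e) \<in> Psum_span"
    by (rule Psum_span_power) (simp add: Hsum_eq_Psum Psum_span.Psum)
  from Psum_span_mult[OF this Cons.IH] show ?case by (simp add: h)
qed

lemma Fval_eq_plval_mult_Hsum_prod:
  "Fval D n = plval (fst D, map (\<lambda>(P, q, c). (- q, P, c)) (fst (snd D))) n *
     (\<Prod>(\<alpha>, e) \<leftarrow> snd (snd D). Hsum \<alpha> n ^ e)"
proof -
  have "(\<Prod>(\<rho>, P, c) \<leftarrow> map (\<lambda>(P, q, c). (- q, P, c)) ps. bpow c (poly P x) (- \<rho>))
      = (\<Prod>(P, q, c) \<leftarrow> ps. bpow c (poly P x) q)" for ps and x :: complex
    by (induction ps) auto
  then show ?thesis by (simp add: Fval_def plval_def)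
qed

lemma Tsum_in_Psum_span: "Tsum F l \<in> Psum_span"
proof (induction l)
  case 0
  show ?case using Psum_span_one by simp
next
  case (Suc l)
  let ?L = "(fst (F (Suc l)), map (\<lambda>(P, q, c). (- q, P, c)) (fst (snd (F (Suc l)))))"
  have "(\<lambda>N. \<Sum>n = 1..N. plval ?L n *
          ((\<Prod>(\<alpha>, e) \<leftarrow> snd (snd (F (Suc l))). Hsum \<alpha> n ^ e) * Tsum F l n)) \<in> Psum_span"
    by (intro Psum_span_sum_current Psum_span_mult Psum_span_Hsum_prod Suc.IH)
  then show ?case by (simp add: Fval_eq_plval_mult_Hsum_prod mult.assoc)
qed

text \<open>With branches fixed by \<open>bpow\<close>, complex powers of \<open>0\<close> are defined too, so the
  non-vanishing hypothesis is not needed; neither is \<open>r \<ge> 1\<close>.\<close>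

theorem theorem7p4:
  fixes r :: nat and F :: "nat \<Rightarrow> fdata"
  assumes "r \<ge> 1"
    and "\<forall>l \<in> {1..r}. \<forall>(P, q, c) \<in> set (fst (snd (F l))).
           \<forall>n::nat \<ge> 1. poly P (of_nat n) \<noteq> 0"
  shows "\<exists>cs :: (complex \<times> pword) list. \<forall>k::nat \<ge> 1.
           Tsum F r k = (\<Sum>(a, \<Omega>) \<leftarrow> cs. a * Psum \<Omega> k)"
  using Tsum_in_Psum_span[of F r] unfolding Psum_span_iff_lincomb by blast

end
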